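(* Let $\frac12<p<1$ and let $f:\mathbb{Z}^+\to[0,\infty)$ be monotonically increasing (non-decreasing). Let $\{N_j\}_{j\ge0}$ be the discrete-time, time-inhomogeneous Markov chain on $\mathbb{N}$ with $N_0=1$, $N_1\sim\mathrm{Bern}\big(\frac{1-p}{p}\big)$, and, for $j\ge1$, conditionally on $N_j$, $N_{j+1}\sim\mathrm{Bin}\big(N_j,\frac{1-p}{p}\big)+\mathrm{Poiss}\big(\frac{1-p}{p}f(j)\big)$ with independent summands. Let $\mathbf{P}^*$ denote its law and $K=\#\{j\in\mathbb{Z}^+:N_j=0\}$. If $$\sum_{j=1}^{\infty}e^{-\frac{1-p}{2p-1}f(j)}<\infty,$$ then $\mathbf{P}^*(K<\infty)=1$. *)

theory Defs
  imports "HOL-Probability.Probability"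
begin

text \<open>Poisson distribution with rate lam \<ge> 0; the library's poisson_pmf requires
  lam > 0, so Poiss(0) is the point mass at 0.\<close>
definition poiss :: "real \<Rightarrow> nat pmf" where
  "poiss lam = (if 0 < lam then poisson_pmf lam else return_pmf 0)"

text \<open>Transition law of the chain from time j (state n) to time j+1, with q = (1-p)/p:
  N_1 ~ Bern(q) (as a 0/1 natural number); for j \<ge> 1,
  N_(j+1) ~ Bin(n, q) + Poiss(q f(j)) with independent summands.\<close>
definition step_pmf :: "real \<Rightarrow> (nat \<Rightarrow> real) \<Rightarrow> nat \<Rightarrow> nat \<Rightarrow> nat pmf" where
  "step_pmf p f j n =
     (if j = 0 then map_pmf (\<lambda>b. if b then 1 else 0) (bernoulli_pmf ((1 - p) / p))
      else map_pmf (\<lambda>(a, b). a + b)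
             (pair_pmf (binomial_pmf n ((1 - p) / p)) (poiss ((1 - p) / p * f j))))"

end

theory Submission
  imports Defs
begin

text \<open>Write q = (1-p)/p \<in> (0,1). The generating function of the chain can be computed exactly:
  a Bin(x,q) variable turns s^x into (1 - q + q s)^x and a Poisson variable of rate q f(j)
  contributes the factor exp(q f(j) (s - 1)). Starting from s = 0 and iterating
  s \<mapsto> 1 - q(1 - s) backwards in time gives
  P(N_n = 0) = (1 - q^n) exp(- \<Sum>_{k=1}^{n-1} f(k) q^(n-k)).
  Since f is non-decreasing, the discounted sum is at least about (q/(1-q)) f(n/2), so
  the hypothesis makes these probabilities summable, and Borel--Cantelli concludes.\<close>

lemma poiss_pgf:
  assumes "0 \<le> lam" "0 \<le> s"
  shows "(\<integral>\<^sup>+k. ennreal (s ^ k) \<partial>measure_pmf (poiss lam)) = ennreal (exp (lam * (s - 1)))"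
proof (cases "lam = 0")
  case True
  then show ?thesis by (simp add: poiss_def)
next
  case False
  with assms have lam: "0 < lam" by auto
  have "(\<integral>\<^sup>+k. ennreal (s ^ k) \<partial>measure_pmf (poiss lam))
      = (\<integral>\<^sup>+k. ennreal (pmf (poisson_pmf lam) k) * ennreal (s ^ k) \<partial>count_space UNIV)"
    using lam by (simp add: poiss_def nn_integral_measure_pmf)
  also have "\<dots> = (\<Sum>k. ennreal (exp (-lam) * ((lam * s) ^ k /\<^sub>R fact k)))"
    unfolding nn_integral_count_space_nat
    using lam assms
    by (intro suminf_cong) (simp add: ennreal_mult'[symmetric] power_mult_distrib divide_inverse mult_ac)
  also have "\<dots> = ennreal (exp (-lam) * exp (lam * s))"
    using lam assms by (intro suminf_ennreal_eq sums_mult exp_converges) simp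
  also have "exp (-lam) * exp (lam * s) = exp (lam * (s - 1))"
    by (simp add: exp_add[symmetric] algebra_simps)
  finally show ?thesis .
qed

lemma binomial_pgf:
  assumes "0 \<le> q" "q \<le> 1" "0 \<le> s"
  shows "(\<integral>\<^sup>+k. ennreal (s ^ k) \<partial>measure_pmf (binomial_pmf n q)) = ennreal ((q * s + (1 - q)) ^ n)"
proof -
  have "(\<integral>\<^sup>+k. ennreal (s ^ k) \<partial>measure_pmf (binomial_pmf n q))
       = (\<Sum>k\<le>n. ennreal (s ^ k) * pmf (binomial_pmf n q) k)"
    using assms by (intro nn_integral_measure_pmf_support) (auto simp: set_pmf_binomial_eq split: if_splits)
  also have "\<dots> = (\<Sum>k\<le>n. ennreal (of_nat (n choose k) * (q * s) ^ k * (1 - q) ^ (n - k)))"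
    using assms by (intro sum.cong refl) (simp add: ennreal_mult'[symmetric] power_mult_distrib mult_ac)
  also have "\<dots> = ennreal ((q * s + (1 - q)) ^ n)"
    using assms by (subst sum_ennreal) (auto simp: binomial_ring)
  finally show ?thesis .
qed

lemma bernoulli_pgf:
  assumes "0 \<le> q" "q \<le> 1" "0 \<le> s"
  shows "(\<integral>\<^sup>+b. ennreal (if b then s else 1) \<partial>measure_pmf (bernoulli_pmf q)) = ennreal (q * s + (1 - q))"
proof -
  have "(\<integral>\<^sup>+b. ennreal (if b then s else 1) \<partial>measure_pmf (bernoulli_pmf q))
      = (\<Sum>b\<in>UNIV. ennreal (if b then s else 1) * pmf (bernoulli_pmf q) b)"
    by (rule nn_integral_measure_pmf_support) auto
  also have "\<dots> = ennreal (q * s + (1 - q))"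
    using assms
    by (simp add: UNIV_bool ennreal_mult'[symmetric] ennreal_plus[symmetric] mult.commute del: ennreal_plus)
  finally show ?thesis .
qed

lemma step_pmf_pgf:
  assumes "1/2 < p" "p < 1" "1 \<le> j" "0 \<le> f j" "0 \<le> s"
  defines "q \<equiv> (1 - p) / p"
  shows "(\<integral>\<^sup>+y. ennreal (s ^ y) \<partial>measure_pmf (step_pmf p f j x))
       = ennreal ((q * s + (1 - q)) ^ x * exp (q * f j * (s - 1)))"
proof -
  have q: "0 \<le> q" "q \<le> 1" using assms by (auto simp: q_def field_simps)
  have "(\<integral>\<^sup>+y. ennreal (s ^ y) \<partial>measure_pmf (step_pmf p f j x))
     = (\<integral>\<^sup>+a. \<integral>\<^sup>+b. ennreal (s ^ a) * ennreal (s ^ b) \<partial>measure_pmf (poiss (q * f j)) \<partial>measure_pmf (binomial_pmf x q))"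
    using assms unfolding step_pmf_def q_def[symmetric]
    by (simp add: nn_integral_pair_pmf' power_add ennreal_mult')
  also have "\<dots> = (\<integral>\<^sup>+a. ennreal (s ^ a) * ennreal (exp (q * f j * (s - 1))) \<partial>measure_pmf (binomial_pmf x q))"
    using assms q by (simp add: nn_integral_cmult poiss_pgf)
  also have "\<dots> = ennreal ((q * s + (1 - q)) ^ x) * ennreal (exp (q * f j * (s - 1)))"
    using assms q by (simp add: nn_integral_multc binomial_pgf)
  finally show ?thesis using assms q by (simp add: ennreal_mult')
qed

lemma step_pmf_0_pgf:
  assumes "1/2 < p" "p < 1" "0 \<le> s"
  defines "q \<equiv> (1 - p) / p"
  shows "(\<integral>\<^sup>+y. ennreal (s ^ y) \<partial>measure_pmf (step_pmf p f 0 x)) = ennreal (q * s + (1 - q))"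
proof -
  have "(\<integral>\<^sup>+y. ennreal (s ^ y) \<partial>measure_pmf (step_pmf p f 0 x))
     = (\<integral>\<^sup>+b. ennreal (if b then s else 1) \<partial>measure_pmf (bernoulli_pmf q))"
    unfolding step_pmf_def q_def by (simp add: if_distrib cong: if_cong)
  also have "\<dots> = ennreal (q * s + (1 - q))"
    using assms by (intro bernoulli_pgf) (auto simp: q_def field_simps)
  finally show ?thesis .
qed

text \<open>The path (N_n, ..., N_1, N_0) of a time-inhomogeneous Markov chain with initial state x0
  and transition kernels K j, stored latest state first.\<close>
primrec chain_path :: "'s \<Rightarrow> (nat \<Rightarrow> 's \<Rightarrow> 's pmf) \<Rightarrow> nat \<Rightarrow> 's list pmf" where
  "chain_path x0 K 0 = return_pmf [x0]"
| "chain_path x0 K (Suc n) = bind_pmf (chain_path x0 K n) (\<lambda>ys. map_pmf (\<lambda>y. y # ys) (K n (hd ys)))"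

lemma length_chain_path: "ys \<in> set_pmf (chain_path x0 K n) \<Longrightarrow> length ys = Suc n"
  by (induction n arbitrary: ys) auto

lemma pmf_chain_path_Suc:
  "pmf (chain_path x0 K (Suc n)) (y # ys) = pmf (chain_path x0 K n) ys * pmf (K n (hd ys)) y"
proof -
  have "pmf (map_pmf (\<lambda>y. y # zs) (K n (hd zs))) (y # ys) = indicator {ys} zs * pmf (K n (hd ys)) y" for zs
  proof (cases "zs = ys")
    case True
    then show ?thesis using pmf_map_inj'[of "\<lambda>y. y # ys" "K n (hd ys)" y] by (simp add: inj_def)
  next
    case False
    then show ?thesis by (simp add: pmf_map vimage_def)
  qed
  then show ?thesis by (simp add: pmf_bind measure_pmf_single)
qed

lemma pmf_chain_path:
  assumes "length xs = Suc n"
  shows "pmf (chain_path x0 K n) (rev xs) =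
           (if xs ! 0 = x0 then 1 else 0) * (\<Prod>i<n. pmf (K i (xs ! i)) (xs ! Suc i))"
  using assms
proof (induction n arbitrary: xs)
  case 0
  then obtain x where "xs = [x]" by (cases xs) auto
  then show ?case by (auto simp: pmf_return)
next
  case (Suc n)
  then obtain zs y where xs: "xs = zs @ [y]" and zs: "length zs = Suc n"
    by (cases xs rule: rev_exhaust) auto
  have "hd (rev zs) = zs ! n" using zs by (cases zs rule: rev_exhaust) (auto simp: hd_rev nth_append)
  then have "pmf (chain_path x0 K (Suc n)) (rev xs) = pmf (chain_path x0 K n) (rev zs) * pmf (K n (zs ! n)) y"
    using xs pmf_chain_path_Suc[of x0 K n y "rev zs"] by (simp del: chain_path.simps)
  also have "\<dots> = (if zs ! 0 = x0 then 1 else 0) * (\<Prod>i<n. pmf (K i (zs ! i)) (zs ! Suc i))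
        * pmf (K n (zs ! n)) y"
    using Suc.IH[OF zs] by simp
  also have "\<dots> = (if xs ! 0 = x0 then 1 else 0) * (\<Prod>i<Suc n. pmf (K i (xs ! i)) (xs ! Suc i))"
  proof -
    have "(\<Prod>i<n. pmf (K i (xs ! i)) (xs ! Suc i)) = (\<Prod>i<n. pmf (K i (zs ! i)) (zs ! Suc i))"
      using zs xs by (intro prod.cong) (auto simp: nth_append)
    moreover have "xs ! n = zs ! n" "xs ! Suc n = y" "xs ! 0 = zs ! 0"
      using zs xs by (auto simp: nth_append)
    ultimately show ?thesis by (simp add: mult_ac)
  qed
  finally show ?case .
qed

definition rev_path :: "(nat \<Rightarrow> 'a \<Rightarrow> 's) \<Rightarrow> nat \<Rightarrow> 'a \<Rightarrow> 's list" where
  "rev_path N n \<omega> = rev (map (\<lambda>i. N i \<omega>) [0..<Suc n])"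

lemma rev_path_eq_iff:
  "rev_path N n \<omega> = ys \<longleftrightarrow> length ys = Suc n \<and> (\<forall>i\<le>n. N i \<omega> = rev ys ! i)"
proof -
  have "rev_path N n \<omega> = ys \<longleftrightarrow> map (\<lambda>i. N i \<omega>) [0..<Suc n] = rev ys"
    unfolding rev_path_def by (metis rev_rev_ident)
  also have "\<dots> \<longleftrightarrow> length ys = Suc n \<and> (\<forall>i<Suc n. N i \<omega> = rev ys ! i)"
    by (auto simp: list_eq_iff_nth_eq simp del: upt_Suc)
  finally show ?thesis by (simp add: less_Suc_eq_le)
qed

lemma hd_rev_path: "hd (rev_path N n \<omega>) = N n \<omega>"
  by (simp add: rev_path_def hd_rev)

lemma measurable_rev_path:
  fixes N :: "nat \<Rightarrow> 'a \<Rightarrow> 's::countable"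
  assumes "\<And>j. N j \<in> measurable M (count_space UNIV)"
  shows "rev_path N n \<in> measurable M (count_space UNIV)"
proof (subst measurable_count_space_eq2_countable, safe)
  fix ys :: "'s list"
  note [measurable] = assms
  have "{\<omega> \<in> space M. \<forall>i\<le>n. N i \<omega> = rev ys ! i} \<in> sets M" by measurable
  then show "rev_path N n -` {ys} \<inter> space M \<in> sets M"
    by (cases "length ys = Suc n") (auto simp: rev_path_eq_iff vimage_def Int_def conj_commute)
qed auto

lemma distr_rev_path_eq_chain_path:
  fixes N :: "nat \<Rightarrow> 'a \<Rightarrow> 's::countable"
  assumes "prob_space M"
    and N_meas: "\<And>j. N j \<in> measurable M (count_space UNIV)"
    and N_law: "\<And>n xs. length xs = Suc n \<Longrightarrow>
        measure M {\<omega> \<in> space M. \<forall>i\<le>n. N i \<omega> = xs ! i} =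
          (if xs ! 0 = x0 then 1 else 0) * (\<Prod>i<n. pmf (K i (xs ! i)) (xs ! Suc i))"
  shows "distr M (count_space UNIV) (rev_path N n) = measure_pmf (chain_path x0 K n)"
proof (rule measure_eqI_countable[where A=UNIV])
  interpret prob_space M by fact
  fix ys :: "'s list"
  have "emeasure (distr M (count_space UNIV) (rev_path N n)) {ys}
      = emeasure M {\<omega> \<in> space M. rev_path N n \<omega> = ys}"
    using measurable_rev_path[OF N_meas]
    by (subst emeasure_distr) (auto intro!: arg_cong[where f="emeasure M"])
  also have "\<dots> = ennreal (pmf (chain_path x0 K n) ys)"
  proof (cases "length ys = Suc n")
    case True
    then show ?thesis
      using N_law[of "rev ys" n] pmf_chain_path[of "rev ys" n x0 K]
      by (simp add: rev_path_eq_iff emeasure_eq_measure)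
  next
    case False
    then have "pmf (chain_path x0 K n) ys = 0"
      using length_chain_path[of ys x0 K n] by (auto simp: pmf_eq_0_set_pmf)
    then show ?thesis using False by (simp add: rev_path_eq_iff)
  qed
  finally show "emeasure (distr M (count_space UNIV) (rev_path N n)) {ys}
      = emeasure (measure_pmf (chain_path x0 K n)) {ys}"
    by (simp add: emeasure_pmf_single)
qed auto

lemma prob_state_eq_chain_path:
  fixes N :: "nat \<Rightarrow> 'a \<Rightarrow> 's::countable"
  assumes "prob_space M"
    and N_meas: "\<And>j. N j \<in> measurable M (count_space UNIV)"
    and N_law: "\<And>n xs. length xs = Suc n \<Longrightarrow>
        measure M {\<omega> \<in> space M. \<forall>i\<le>n. N i \<omega> = xs ! i} =
          (if xs ! 0 = x0 then 1 else 0) * (\<Prod>i<n. pmf (K i (xs ! i)) (xs ! Suc i))"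
  shows "measure M {\<omega> \<in> space M. N n \<omega> = x} = measure_pmf.prob (chain_path x0 K n) {ys. hd ys = x}"
proof -
  have "measure M {\<omega> \<in> space M. N n \<omega> = x} = measure (distr M (count_space UNIV) (rev_path N n)) {ys. hd ys = x}"
    using measurable_rev_path[OF N_meas]
    by (subst measure_distr) (auto simp: hd_rev_path vimage_def Int_def conj_commute)
  then show ?thesis by (simp add: distr_rev_path_eq_chain_path[OF assms])
qed

definition discounted_sum :: "real \<Rightarrow> (nat \<Rightarrow> real) \<Rightarrow> nat \<Rightarrow> real" where
  "discounted_sum q f n = (\<Sum>k\<in>{1..<n}. f k * q ^ (n - k))"

lemma discounted_sum_Suc:
  assumes "1 \<le> n"
  shows "discounted_sum q f (Suc n) = q * (discounted_sum q f n + f n)"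
proof -
  have "(\<Sum>k\<in>{1..<n}. f k * q ^ (Suc n - k)) = q * (\<Sum>k\<in>{1..<n}. f k * q ^ (n - k))"
    unfolding sum_distrib_left by (intro sum.cong) (auto simp: Suc_diff_le)
  then show ?thesis
    using assms by (simp add: discounted_sum_def sum.atLeastLessThan_Suc algebra_simps)
qed

text \<open>One step of the chain maps the argument 1 - q^m of the generating function to
  1 - q^(m+1); hence the induction is over n for all m simultaneously.\<close>
lemma chain_path_pgf:
  assumes p: "1/2 < p" "p < 1" and f_nonneg: "\<And>j. 1 \<le> j \<Longrightarrow> 0 \<le> f j"
  defines "q \<equiv> (1 - p) / p"
  shows "(\<integral>\<^sup>+ys. ennreal ((1 - q ^ m) ^ hd ys) \<partial>measure_pmf (chain_path 1 (step_pmf p f) n))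
       = ennreal ((1 - q ^ (n + m)) * exp (- (q ^ m * discounted_sum q f n)))"
proof (induction n arbitrary: m)
  case 0
  then show ?case by (simp add: discounted_sum_def)
next
  case (Suc n)
  have q: "0 \<le> q" "q \<le> 1" using p by (auto simp: q_def field_simps)
  have s: "0 \<le> 1 - q ^ m" "q * (1 - q ^ m) + (1 - q) = 1 - q ^ Suc m"
    using q by (auto simp: power_le_one algebra_simps)
  have "(\<integral>\<^sup>+ys. ennreal ((1 - q ^ m) ^ hd ys) \<partial>measure_pmf (chain_path 1 (step_pmf p f) (Suc n)))
     = (\<integral>\<^sup>+ys. (\<integral>\<^sup>+y. ennreal ((1 - q ^ m) ^ y) \<partial>measure_pmf (step_pmf p f n (hd ys)))
          \<partial>measure_pmf (chain_path 1 (step_pmf p f) n))"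
    by simp
  also have "\<dots> = ennreal ((1 - q ^ (Suc n + m)) * exp (- (q ^ m * discounted_sum q f (Suc n))))"
  proof (cases "n = 0")
    case True
    have "(\<integral>\<^sup>+y. ennreal ((1 - q ^ m) ^ y) \<partial>measure_pmf (step_pmf p f 0 1)) = ennreal (1 - q ^ Suc m)"
      using step_pmf_0_pgf[OF p s(1), of f 1] unfolding q_def[symmetric] s(2) .
    then show ?thesis using True by (simp add: discounted_sum_def)
  next
    case False
    then have n: "1 \<le> n" by simp
    have "0 \<le> 1 - q ^ Suc m" using q by (simp only: diff_ge_0_iff_ge power_le_one)
    then have "(\<integral>\<^sup>+y. ennreal ((1 - q ^ m) ^ y) \<partial>measure_pmf (step_pmf p f n x))
        = ennreal ((1 - q ^ Suc m) ^ x) * ennreal (exp (- (q ^ Suc m * f n)))" for x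
      using step_pmf_pgf[where f=f and j=n and x=x, OF p n f_nonneg[OF n] s(1)] unfolding q_def[symmetric] s(2)
      by (simp add: ennreal_mult' algebra_simps)
    then have "(\<integral>\<^sup>+ys. (\<integral>\<^sup>+y. ennreal ((1 - q ^ m) ^ y) \<partial>measure_pmf (step_pmf p f n (hd ys)))
          \<partial>measure_pmf (chain_path 1 (step_pmf p f) n))
        = ennreal ((1 - q ^ (n + Suc m)) * exp (- (q ^ Suc m * discounted_sum q f n)))
            * ennreal (exp (- (q ^ Suc m * f n)))"
      using Suc.IH[of "Suc m"] by (simp add: nn_integral_multc del: power_Suc)
    also have "\<dots> = ennreal ((1 - q ^ (Suc n + m)) * exp (- (q ^ m * discounted_sum q f (Suc n))))"
      using False q
      by (simp add: discounted_sum_Suc ennreal_mult'[symmetric] power_le_one mult_exp_exp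
          algebra_simps)
    finally show ?thesis .
  qed
  finally show ?case .
qed

lemma chain_path_prob_zero:
  assumes "1/2 < p" "p < 1" "\<And>j. 1 \<le> j \<Longrightarrow> 0 \<le> f j"
  defines "q \<equiv> (1 - p) / p"
  shows "measure_pmf.prob (chain_path 1 (step_pmf p f) n) {ys. hd ys = 0}
       = (1 - q ^ n) * exp (- discounted_sum q f n)"
proof -
  have q: "0 \<le> q" "q \<le> 1" using assms by (auto simp: q_def field_simps)
  have "indicator {ys. hd ys = 0} = (\<lambda>ys::nat list. ennreal ((1 - q ^ 0) ^ hd ys))"
    by (auto simp: indicator_def fun_eq_iff)
  then have "emeasure (measure_pmf (chain_path 1 (step_pmf p f) n)) {ys. hd ys = 0}
      = (\<integral>\<^sup>+ys. ennreal ((1 - q ^ 0) ^ hd ys) \<partial>measure_pmf (chain_path 1 (step_pmf p f) n))"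
    by (metis nn_integral_indicator sets_measure_pmf UNIV_I)
  also have "\<dots> = ennreal ((1 - q ^ n) * exp (- discounted_sum q f n))"
    using chain_path_pgf[where p=p and f=f and m=0 and n=n] assms(1-3) by (simp add: q_def)
  finally show ?thesis
    using q by (simp add: measure_pmf.emeasure_eq_measure power_le_one)
qed

lemma summable_div_2:
  fixes g :: "nat \<Rightarrow> real"
  assumes "summable g" and g_nonneg: "\<And>n. 0 \<le> g n"
  shows "summable (\<lambda>n. g (n div 2))"
proof (rule summableI_nonneg_bounded)
  fix N
  have "(\<Sum>n<N. g (n div 2)) \<le> (\<Sum>n<2 * N. g (n div 2))"
    by (rule sum_mono2) (auto simp: g_nonneg)
  also have "\<dots> = 2 * (\<Sum>k<N. g k)"
    by (induction N) (auto simp: algebra_simps)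
  also have "\<dots> \<le> 2 * suminf g"
    using sum_le_suminf[OF assms(1), of "{..<N}"] g_nonneg by auto
  finally show "(\<Sum>n<N. g (n div 2)) \<le> 2 * suminf g" .
qed (use g_nonneg in auto)

lemma sum_power_diff_geometric:
  fixes q :: real
  assumes "q \<noteq> 1"
  shows "(\<Sum>k\<in>{m..<m + L}. q ^ (m + L - k)) = q * (1 - q ^ L) / (1 - q)"
proof -
  have "(\<Sum>k\<in>{m..<m + L}. q ^ (m + L - k)) = (\<Sum>i\<in>{0..<L}. q ^ (m + L - (i + m)))"
    using sum.shift_bounds_nat_ivl[of "\<lambda>k. q ^ (m + L - k)" 0 m L] by (simp add: add.commute)
  also have "\<dots> = (\<Sum>i<L. q * q ^ (L - Suc i))"
    by (intro sum.cong) (auto simp: Suc_diff_Suc simp flip: power_Suc)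
  also have "\<dots> = q * (1 - q ^ L) / (1 - q)"
    using assms by (simp add: one_diff_power_eq' sum_distrib_left[symmetric])
  finally show ?thesis .
qed

lemma exp_neg_le_inverse:
  fixes x :: real
  assumes "0 < x"
  shows "exp (- x) \<le> 1 / x"
proof -
  have "x \<le> exp x" using exp_ge_add_one_self[of x] by linarith
  then show ?thesis using assms by (simp add: exp_minus field_simps)
qed

text \<open>Only the last n - n div 2 terms are kept, where f \<ge> f(n div 2) by monotonicity.\<close>
lemma discounted_sum_ge:
  fixes q :: real and f :: "nat \<Rightarrow> real"
  assumes q: "0 < q" "q < 1" and n: "2 \<le> n"
    and f_nonneg: "\<And>j. 1 \<le> j \<Longrightarrow> 0 \<le> f j"
    and f_mono: "\<And>i j. 1 \<le> i \<Longrightarrow> i \<le> j \<Longrightarrow> f i \<le> f j"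
  shows "q / (1 - q) * f (n div 2) * (1 - q ^ (n - n div 2)) \<le> discounted_sum q f n"
proof -
  define m where "m = n div 2"
  have m: "1 \<le> m" "m + (n - m) = n" using n by (auto simp: m_def)
  have "q / (1 - q) * f m * (1 - q ^ (n - m)) = f m * (\<Sum>k\<in>{m..<n}. q ^ (n - k))"
    using sum_power_diff_geometric[of q m "n - m"] q m by simp
  also have "\<dots> \<le> (\<Sum>k\<in>{m..<n}. f k * q ^ (n - k))"
    unfolding sum_distrib_left using q f_mono[OF m(1)] by (intro sum_mono mult_right_mono) auto
  also have "\<dots> \<le> discounted_sum q f n"
    unfolding discounted_sum_def using m q f_nonneg by (intro sum_mono2) auto
  finally show ?thesis by (simp add: m_def)
qed

lemma exp_neg_discounted_sum_le:
  fixes q :: real and f :: "nat \<Rightarrow> real"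
  assumes q: "0 < q" "q < 1" and n: "2 \<le> n"
    and f_nonneg: "\<And>j. 1 \<le> j \<Longrightarrow> 0 \<le> f j"
    and f_mono: "\<And>i j. 1 \<le> i \<Longrightarrow> i \<le> j \<Longrightarrow> f i \<le> f j"
  defines "c \<equiv> q / (1 - q)"
  shows "exp (- discounted_sum q f n) \<le> exp c * (exp (- c * f (n div 2)) + q ^ (n div 2) / c)"
proof -
  define m where "m = n div 2"
  define r where "r = q ^ (n - m)"
  have c: "0 < c" using q by (simp add: c_def)
  have r: "0 < r" "r \<le> q ^ m" using q n by (auto simp: r_def m_def intro: power_decreasing)
  have D: "c * f m * (1 - r) \<le> discounted_sum q f n"
    using discounted_sum_ge[OF q n f_nonneg f_mono] by (simp add: c_def m_def r_def)
  \<comment> \<open>If f(m) r \<le> 1 the loss c f(m) r is at most c; otherwise f(m) > 1/r and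
    exp(-x) \<le> 1/x leaves r / c \<le> q^m / c.\<close>
  show ?thesis
  proof (cases "f m * r \<le> 1")
    case True
    then have "c * f m - c \<le> c * f m * (1 - r)"
      using c by (simp add: algebra_simps)
    then have "exp (- discounted_sum q f n) \<le> exp (c + - c * f m)"
      using D by simp
    also have "\<dots> = exp c * exp (- c * f m)" by (rule exp_add)
    also have "\<dots> \<le> exp c * (exp (- c * f m) + q ^ m / c)"
      using c q by (intro mult_left_mono) auto
    finally show ?thesis by (simp add: m_def)
  next
    case False
    have r1: "r \<le> 1" using q by (simp add: r_def power_le_one)
    have "1 / r \<le> f m" using False r by (simp add: field_simps)
    then have "c * (1 / r) * (1 - r) \<le> c * f m * (1 - r)"
      using c r1 by (intro mult_right_mono mult_left_mono) auto
    moreover have "c * (1 / r) * (1 - r) = c / r - c" using r by (simp add: field_simps)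
    ultimately have "exp (- discounted_sum q f n) \<le> exp (c + - (c / r))"
      using D by simp
    also have "\<dots> = exp c * exp (- (c / r))" by (rule exp_add)
    also have "exp (- (c / r)) \<le> r / c"
      using exp_neg_le_inverse[of "c / r"] c r by simp
    also have "r / c \<le> exp (- c * f m) + q ^ m / c"
      using r c by (simp add: add_increasing divide_right_mono)
    finally show ?thesis by (simp add: m_def)
  qed
qed

lemma summable_exp_neg_discounted_sum:
  fixes q :: real and f :: "nat \<Rightarrow> real"
  assumes q: "0 < q" "q < 1"
    and f_nonneg: "\<And>j. 1 \<le> j \<Longrightarrow> 0 \<le> f j"
    and f_mono: "\<And>i j. 1 \<le> i \<Longrightarrow> i \<le> j \<Longrightarrow> f i \<le> f j"
    and summ: "summable (\<lambda>j. exp (- (q / (1 - q)) * f (Suc j)))"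
  shows "summable (\<lambda>n. exp (- discounted_sum q f n))"
proof -
  define c where "c = q / (1 - q)"
  have c: "0 < c" using q by (simp add: c_def)
  define g where "g k = exp (- c * f k) + q ^ k / c" for k
  have "summable (\<lambda>k. exp (- c * f k))"
    using summ unfolding c_def by (rule summable_Suc_iff[THEN iffD1])
  moreover have "summable (\<lambda>k. q ^ k / c)"
    using q by (intro summable_divide summable_geometric) simp
  ultimately have "summable g"
    unfolding g_def by (rule summable_add)
  moreover have "0 \<le> g k" for k using q c by (simp add: g_def)
  ultimately have "summable (\<lambda>n. exp c * g (n div 2))"
    by (intro summable_mult) (rule summable_div_2)
  then show ?thesis
  proof (rule summable_comparison_test'[where N=2])
    fix n :: nat
    assume "2 \<le> n"
    then show "norm (exp (- discounted_sum q f n)) \<le> exp c * g (n div 2)"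
      using exp_neg_discounted_sum_le[where f=f, OF q _ f_nonneg f_mono] by (simp add: g_def c_def)
  qed
qed

lemma (in prob_space) prob_finitely_many_eq_1:
  assumes A: "\<And>j. A j \<in> events" and summ: "summable (\<lambda>j. prob (A j))"
  shows "prob {\<omega> \<in> space M. finite {j. \<omega> \<in> A j}} = 1"
proof -
  have fin_iff: "finite {j. \<omega> \<in> A j} \<longleftrightarrow> (\<exists>K. \<forall>j. \<omega> \<in> A j \<longrightarrow> j < K)" for \<omega>
    by (simp add: finite_nat_set_iff_bounded)
  have "AE \<omega> in M. eventually (\<lambda>j. \<omega> \<in> space M - A j) sequentially"
    using A summ by (intro borel_cantelli_AE1) (auto simp: emeasure_eq_measure)
  then have "AE \<omega> in M. finite {j. \<omega> \<in> A j}"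
    by eventually_elim (auto simp: eventually_sequentially fin_iff not_le[symmetric])
  moreover have "{\<omega> \<in> space M. finite {j. \<omega> \<in> A j}} \<in> events"
    unfolding fin_iff using A by measurable
  ultimately show ?thesis by (simp add: prob_Collect_eq_1)
qed

lemma finite_nat_pos_iff: "finite {j::nat. 1 \<le> j \<and> P j} \<longleftrightarrow> finite {j. P j}"
proof
  assume "finite {j::nat. 1 \<le> j \<and> P j}"
  moreover have "{j. P j} \<subseteq> insert 0 {j::nat. 1 \<le> j \<and> P j}" by auto
  ultimately show "finite {j. P j}" by (meson finite_insert finite_subset)
qed (auto intro: finite_subset)

theorem proposition8:
  fixes p :: real and f :: "nat \<Rightarrow> real"
    and M :: "'a measure" and N :: "nat \<Rightarrow> 'a \<Rightarrow> nat"
  assumes p_gt: "1/2 < p" and p_lt: "p < 1"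
    and f_nonneg: "\<And>j. 1 \<le> j \<Longrightarrow> 0 \<le> f j"
    and f_mono: "\<And>i j. 1 \<le> i \<Longrightarrow> i \<le> j \<Longrightarrow> f i \<le> f j"
    and M_prob: "prob_space M"
    and N_meas: "\<And>j. N j \<in> measurable M (count_space UNIV)"
    and N_law: "\<And>n xs. length xs = Suc n \<Longrightarrow>
        measure M {\<omega> \<in> space M. \<forall>i\<le>n. N i \<omega> = xs ! i} =
          (if xs ! 0 = 1 then 1 else 0) *
          (\<Prod>i<n. pmf (step_pmf p f i (xs ! i)) (xs ! Suc i))"
    and summ: "summable (\<lambda>j. exp (- ((1 - p) / (2 * p - 1)) * f (Suc j)))"
  shows "measure M {\<omega> \<in> space M. finite {j::nat. 1 \<le> j \<and> N j \<omega> = 0}} = 1"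
proof -
  interpret prob_space M by (rule M_prob)
  note [measurable] = N_meas
  define q where "q = (1 - p) / p"
  have q: "0 < q" "q < 1" using p_gt p_lt by (auto simp: q_def field_simps)
  define A where "A j = {\<omega> \<in> space M. N j \<omega> = 0}" for j
  have "q / (1 - q) = (1 - p) / (2 * p - 1)"
    using p_gt p_lt by (simp add: q_def field_simps)
  with summ have "summable (\<lambda>j. exp (- (q / (1 - q)) * f (Suc j)))"
    by (simp only:)
  with q f_nonneg f_mono have summable_D: "summable (\<lambda>j. exp (- discounted_sum q f j))"
    by (rule summable_exp_neg_discounted_sum)
  have "prob (A j) = (1 - q ^ j) * exp (- discounted_sum q f j)" for j
    using prob_state_eq_chain_path[OF M_prob N_meas N_law]
      chain_path_prob_zero[where f=f, OF p_gt p_lt f_nonneg]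
    by (simp add: A_def q_def)
  moreover have "0 \<le> 1 - q ^ j" for j
    using q by (simp add: power_le_one)
  ultimately have "norm (prob (A j)) \<le> exp (- discounted_sum q f j)" for j
    using q by (simp add: mult_le_cancel_right1)
  with summable_D have "summable (\<lambda>j. prob (A j))"
    by (rule summable_comparison_test')
  then have "prob {\<omega> \<in> space M. finite {j. \<omega> \<in> A j}} = 1"
    by (intro prob_finitely_many_eq_1) (simp_all add: A_def)
  moreover have "{\<omega> \<in> space M. finite {j. \<omega> \<in> A j}}
      = {\<omega> \<in> space M. finite {j::nat. 1 \<le> j \<and> N j \<omega> = 0}}"
    unfolding A_def finite_nat_pos_iff by auto
  ultimately show ?thesis by simp
qed

end
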